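(* If there exists a depth assignment $d:\Sigma^n\to\Sigma$ such that the valid subgraph of $B_n$ has a Hamiltonian cycle, then such a cycle $s_0,s_1,\dots,s_{N-1}$ (with $N=k^n$) corresponds to a de Bruijn sequence $s_0[0]s_1[0]\cdots s_{N-1}[0]$ of order $n$ whose discrepancy is at most $n+1$.
   Context: Let $k\ge 1$ be an integer, $\Sigma=\{0,1,\dots,k-1\}$ with arithmetic on symbols taken modulo $k$, and $n\ge 1$. For $s\in\Sigma^n$ write $s=s[0]\cdots s[n-1]$. The de Bruijn graph $B_n$ has node set $\Sigma^n$ and an arc $(s,t)$ iff $s[1]\cdots s[n-1]=t[0]\cdots t[n-2]$. A depth assignment is any function $d:\Sigma^n\to\Sigma$, written $s\mapsto d_s$. An arc $(s,t)$ of $B_n$ is valid (with respect to $d$) if, with $b=s[0]$ and $c=t[n-1]$, either ($b+1=c$ and $d_s=d_t$) or ($b+1=d_t$ and $c=d_s$); the valid arcs (on all of $\Sigma^n$) form the valid subgraph. A de Bruijn sequence of order $n$ is a circular string of length $k^n$ in which every string in $\Sigma^n$ occurs exactly once. The discrepancy of a string $w$ is the maximum over all substrings $s$ of $w$ (viewed circularly) of $\max_{a\in\Sigma}|s|_a-\min_{c\in\Sigma}|s|_c$, where $|s|_a$ is the number of occurrences of $a$ in $s$. *)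

theory Defs
  imports Main
begin

definition words :: "nat \<Rightarrow> nat \<Rightarrow> nat list set" where
  "words k n = {s. length s = n \<and> set s \<subseteq> {..<k}}"

definition db_arc :: "nat \<Rightarrow> nat \<Rightarrow> nat list \<Rightarrow> nat list \<Rightarrow> bool" where
  "db_arc k n s t \<longleftrightarrow> s \<in> words k n \<and> t \<in> words k n \<and> tl s = butlast t"

definition valid_arc :: "nat \<Rightarrow> nat \<Rightarrow> (nat list \<Rightarrow> nat) \<Rightarrow> nat list \<Rightarrow> nat list \<Rightarrow> bool" where
  "valid_arc k n d s t \<longleftrightarrow> db_arc k n s t \<and>
     (let b = s ! 0; c = t ! (n - 1) in
       ((b + 1) mod k = c \<and> d s = d t) \<or> ((b + 1) mod k = d t \<and> c = d s))"

definition circ_sub :: "nat list \<Rightarrow> nat \<Rightarrow> nat \<Rightarrow> nat list" where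
  "circ_sub w i l = map (\<lambda>j. w ! ((i + j) mod length w)) [0..<l]"

definition de_bruijn :: "nat \<Rightarrow> nat \<Rightarrow> nat list \<Rightarrow> bool" where
  "de_bruijn k n w \<longleftrightarrow> length w = k ^ n \<and> set w \<subseteq> {..<k} \<and>
     (\<forall>s \<in> words k n. \<exists>!i. i < length w \<and> circ_sub w i n = s)"

definition discrepancy :: "nat \<Rightarrow> nat list \<Rightarrow> int" where
  "discrepancy k w = Max {int (count_list s a) - int (count_list s c) | s a c.
      (\<exists>i l. i < length w \<and> l \<le> length w \<and> s = circ_sub w i l) \<and> a < k \<and> c < k}"

end

theory Submission
  imports Defs "HOL-Library.Multiset"
begin

text \<open>Extend each node s to the list d s # s of length n + 1. An arc (s, t) is valid
  exactly when the multisets of s!0 # d t # t and (s!0 + 1) # d s # s coincide. Fix symbols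
  a, c and the cyclic interval I = (c, a] of \<Sigma>. Emitting the head b of the current node and
  moving on changes the number of entries of d s # s lying in I by [b + 1 \<in> I] - [b \<in> I],
  which equals [b = a] - [b = c]. So on every window of the sequence, #a - #c is the decrease
  of that number between the end nodes of the window, hence at most n + 1. The de Bruijn
  property only needs that consecutive nodes overlap in n - 1 symbols, so the n symbols read
  off from node s spell s.\<close>

lemma length_filter_eq_if_mset_eq:
  "mset xs = mset ys \<Longrightarrow> length (filter P xs) = length (filter P ys)"
  by (metis mset_filter size_mset)

lemma length_filter_add_count_list_eq:
  assumes "\<forall>x\<in>set u. of_bool (P x) + of_bool (x = c) = of_bool (Q x) + (of_bool (x = a) :: nat)"
  shows "length (filter P u) + count_list u c = length (filter Q u) + count_list u a"
  using assms by (induction u) (simp_all add: of_bool_def split: if_splits)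

definition cyclic_interval :: "nat \<Rightarrow> nat \<Rightarrow> nat \<Rightarrow> nat set" where
  "cyclic_interval k c a = {x. x < k \<and> (if c < a then c < x \<and> x \<le> a else x \<le> a \<or> c < x)}"

lemma of_bool_cyclic_interval_Suc:
  assumes "b < k" "a < k" "c < k"
  shows "of_bool (b \<in> cyclic_interval k c a) + of_bool (b = c) =
         of_bool (Suc b mod k \<in> cyclic_interval k c a) + (of_bool (b = a) :: nat)"
proof -
  have "Suc b mod k = (if Suc b = k then 0 else Suc b)"
    using assms(1) by auto
  then show ?thesis
    using assms unfolding cyclic_interval_def by (auto simp: of_bool_def)
qed

lemma words_nth_less: "s \<in> words k n \<Longrightarrow> i < n \<Longrightarrow> s ! i < k"
  unfolding words_def using nth_mem by blast

lemma db_arc_Cons_snoc: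
  assumes "db_arc k n s t" "n \<ge> 1"
  shows "s = s ! 0 # tl s" "t = tl s @ [t ! (n - 1)]"
proof -
  have "length s = n" "length t = n" "tl s = butlast t"
    using assms(1) unfolding db_arc_def words_def by auto
  moreover from this assms(2) have "s \<noteq> []" "t \<noteq> []"
    by auto
  ultimately have "t ! (n - 1) = last t"
    by (simp add: last_conv_nth)
  then show "t = tl s @ [t ! (n - 1)]"
    using \<open>tl s = butlast t\<close> \<open>t \<noteq> []\<close> by simp
  show "s = s ! 0 # tl s"
    using \<open>s \<noteq> []\<close> by (simp add: hd_conv_nth [symmetric])
qed

lemma valid_arc_mset:
  assumes "valid_arc k n d s t" "n \<ge> 1"
  shows "mset (s ! 0 # d t # t) = mset (Suc (s ! 0) mod k # d s # s)"
proof -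
  have arc: "db_arc k n s t"
    and "(Suc (s ! 0) mod k = t ! (n - 1) \<and> d s = d t) \<or>
         (Suc (s ! 0) mod k = d t \<and> t ! (n - 1) = d s)"
    using assms(1) unfolding valid_arc_def Let_def by auto
  moreover have "mset (s ! 0 # d t # t) = {#s ! 0, d t, t ! (n - 1)#} + mset (tl s)"
    by (subst db_arc_Cons_snoc(2)[OF arc assms(2)]) simp
  moreover have "mset (Suc (s ! 0) mod k # d s # s) = {#Suc (s ! 0) mod k, d s, s ! 0#} + mset (tl s)"
    by (subst db_arc_Cons_snoc(1)[OF arc assms(2)]) simp
  ultimately show ?thesis
    by (auto simp: add_mset_commute)
qed

lemma db_walk_nth:
  assumes "\<forall>j. db_arc k n (v j) (v (Suc j))" "i + m < n"
  shows "v (j + m) ! i = v j ! (i + m)"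
  using assms(2)
proof (induction m arbitrary: i)
  case 0
  then show ?case by simp
next
  case (Suc m)
  let ?s = "v (j + m)" and ?t = "v (Suc (j + m))"
  have len: "length ?s = n" "length ?t = n" and overlap: "tl ?s = butlast ?t"
    using assms(1) unfolding db_arc_def words_def by auto
  have "?t ! i = butlast ?t ! i"
    using len(2) Suc.prems by (simp add: nth_butlast)
  also have "\<dots> = tl ?s ! i"
    using overlap by simp
  also have "\<dots> = ?s ! Suc i"
    using len(1) Suc.prems by (simp add: nth_tl)
  finally have "?t ! i = ?s ! Suc i" .
  then show ?case
    using Suc.IH[of "Suc i"] Suc.prems by simp
qed

lemma db_walk_heads:
  assumes "\<forall>j. db_arc k n (v j) (v (Suc j))"
  shows "map (\<lambda>j. v (i + j) ! 0) [0..<n] = v i"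
proof -
  have "length (v i) = n"
    using assms unfolding db_arc_def words_def by blast
  with db_walk_nth[OF assms, of 0] show ?thesis
    by (intro nth_equalityI) auto
qed

lemma valid_walk_count_telescope:
  assumes "\<forall>j<l. valid_arc k n d (v j) (v (Suc j))" "n \<ge> 1"
  defines "u \<equiv> map (\<lambda>j. v j ! 0) [0..<l]"
  shows "length (filter P (d (v l) # v l)) + length (filter P u) =
         length (filter P (d (v 0) # v 0)) + length (filter (\<lambda>x. P (Suc x mod k)) u)"
  using assms(1) unfolding u_def
proof (induction l)
  case 0
  then show ?case by simp
next
  case (Suc l)
  have "length (filter P (v l ! 0 # d (v (Suc l)) # v (Suc l))) =
        length (filter P (Suc (v l ! 0) mod k # d (v l) # v l))"
    using valid_arc_mset[OF _ assms(2)] Suc.prems length_filter_eq_if_mset_eq by blast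
  then show ?case
    using Suc by (auto split: if_splits)
qed

lemma valid_walk_count_diff_le:
  fixes l :: nat
  assumes "\<forall>j. valid_arc k n d (v j) (v (Suc j))" "n \<ge> 1" "a < k" "c < k"
  defines "u \<equiv> map (\<lambda>j. v j ! 0) [0..<l]"
  shows "int (count_list u a) - int (count_list u c) \<le> int n + 1"
proof -
  let ?I = "cyclic_interval k c a"
  have walk: "\<forall>j<l. valid_arc k n d (v j) (v (Suc j))"
    using assms(1) by blast
  have nodes: "v j \<in> words k n" for j
    using assms(1) unfolding valid_arc_def db_arc_def by blast
  then have "\<forall>x\<in>set u. x < k"
    unfolding u_def using words_nth_less[OF nodes, where i = 0] assms(2) by auto
  then have "length (filter (\<lambda>x. x \<in> ?I) u) + count_list u c =
             length (filter (\<lambda>x. Suc x mod k \<in> ?I) u) + count_list u a"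
    using of_bool_cyclic_interval_Suc assms(3,4) by (intro length_filter_add_count_list_eq) auto
  moreover have "length (filter (\<lambda>x. x \<in> ?I) (d (v 0) # v 0)) \<le> length (d (v 0) # v 0)"
    by (rule length_filter_le)
  moreover have "length (d (v 0) # v 0) = n + 1"
    using nodes[of 0] unfolding words_def by simp
  ultimately show ?thesis
    using valid_walk_count_telescope[OF walk assms(2), where P = "\<lambda>x. x \<in> ?I"]
    unfolding u_def by linarith
qed

definition cycle_node :: "'a list \<Rightarrow> nat \<Rightarrow> 'a" where
  "cycle_node xs j = xs ! (j mod length xs)"

lemma cycle_node_arc:
  assumes "\<forall>i < length xs. R (xs ! i) (xs ! ((i + 1) mod length xs))" "xs \<noteq> []"
  shows "R (cycle_node xs j) (cycle_node xs (Suc j))"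
  using assms(1)[rule_format, of "j mod length xs"] assms(2)
  by (simp add: cycle_node_def mod_Suc_eq)

lemma circ_sub_map:
  "xs \<noteq> [] \<Longrightarrow> circ_sub (map f xs) i l = map (\<lambda>j. f (cycle_node xs (i + j))) [0..<l]"
  unfolding circ_sub_def cycle_node_def by simp

lemma de_bruijn_heads_of_db_cycle:
  assumes "length cyc = k ^ n" "distinct cyc" "set cyc = words k n" "n \<ge> 1"
    and "\<forall>j. db_arc k n (cycle_node cyc j) (cycle_node cyc (Suc j))"
  shows "de_bruijn k n (map (\<lambda>s. s ! 0) cyc)"
  unfolding de_bruijn_def
proof (intro conjI ballI)
  have "circ_sub (map (\<lambda>s. s ! 0) cyc) i n = cyc ! i" if "i < length cyc" for i
  proof -
    have "cyc \<noteq> []"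
      using that by auto
    then show ?thesis
      using db_walk_heads[OF assms(5), of i] that by (simp add: circ_sub_map cycle_node_def)
  qed
  then show "\<exists>!i. i < length (map (\<lambda>s. s ! 0) cyc) \<and> circ_sub (map (\<lambda>s. s ! 0) cyc) i n = s"
    if "s \<in> words k n" for s
    using distinct_Ex1[OF assms(2), of s] that assms(3) by (metis length_map)
  show "set (map (\<lambda>s. s ! 0) cyc) \<subseteq> {..<k}"
    using assms(3,4) words_nth_less by auto
qed (simp add: assms(1))

lemma discrepancy_le:
  assumes "w \<noteq> []" "k \<ge> 1"
    and "\<And>i l a c. a < k \<Longrightarrow> c < k \<Longrightarrow>
           int (count_list (circ_sub w i l) a) - int (count_list (circ_sub w i l) c) \<le> B"
  shows "discrepancy k w \<le> B"
proof -
  let ?diff = "\<lambda>(i, l, a, c). int (count_list (circ_sub w i l) a) - int (count_list (circ_sub w i l) c)"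
  let ?D = "{int (count_list s a) - int (count_list s c) | s a c.
      (\<exists>i l. i < length w \<and> l \<le> length w \<and> s = circ_sub w i l) \<and> a < k \<and> c < k}"
  have D_eq: "?D = ?diff ` ({..<length w} \<times> {..length w} \<times> {..<k} \<times> {..<k})"
    by (auto simp: image_iff) blast+
  have "finite ?D" and "?D \<noteq> {}"
    unfolding D_eq using assms(1,2) by (auto simp: lessThan_empty_iff)
  then show ?thesis
    unfolding discrepancy_def using assms(3) by (subst Max_le_iff) auto
qed

theorem theorem2:
  fixes k n :: nat and d :: "nat list \<Rightarrow> nat" and cyc :: "nat list list"
  assumes "k \<ge> 1" and "n \<ge> 1"
    and "\<forall>s \<in> words k n. d s < k"
    and "length cyc = k ^ n" and "distinct cyc" and "set cyc = words k n"
    and "\<forall>i < length cyc. valid_arc k n d (cyc ! i) (cyc ! ((i + 1) mod length cyc))"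
  shows "de_bruijn k n (map (\<lambda>s. s ! 0) cyc) \<and>
         discrepancy k (map (\<lambda>s. s ! 0) cyc) \<le> int n + 1"
proof
  have "cyc \<noteq> []"
    using assms(1,4) by auto
  then have arcs: "valid_arc k n d (cycle_node cyc j) (cycle_node cyc (Suc j))" for j
    using cycle_node_arc[OF assms(7)] by blast
  then show "de_bruijn k n (map (\<lambda>s. s ! 0) cyc)"
    using de_bruijn_heads_of_db_cycle[OF assms(4,5,6,2)] unfolding valid_arc_def by blast
  show "discrepancy k (map (\<lambda>s. s ! 0) cyc) \<le> int n + 1"
  proof (rule discrepancy_le)
    fix i l a c :: nat
    assume "a < k" "c < k"
    have "\<forall>j. valid_arc k n d (cycle_node cyc (i + j)) (cycle_node cyc (i + Suc j))"
      using arcs by simp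
    from valid_walk_count_diff_le[where v = "\<lambda>j. cycle_node cyc (i + j)", OF this assms(2)
        \<open>a < k\<close> \<open>c < k\<close>]
    show "int (count_list (circ_sub (map (\<lambda>s. s ! 0) cyc) i l) a) -
          int (count_list (circ_sub (map (\<lambda>s. s ! 0) cyc) i l) c) \<le> int n + 1"
      by (simp add: circ_sub_map \<open>cyc \<noteq> []\<close>)
  qed (use \<open>cyc \<noteq> []\<close> assms(1) in auto)
qed

end
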